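(* Let $A$ be a random variable with values in $\{u,v\}$, $\mathbb{P}(A=u)=p_u$, $\mathbb{P}(A=v)=p_v$, $p_u+p_v=1$, and let $(U,V)$ be a random vector independent of $A$ that is bivariate normal with $\mathbb{E}[U]=\mathbb{E}[V]=\mu<0$, $\operatorname{Var}(U)=\operatorname{Var}(V)=\sigma^2$ with $\sigma>0$, and correlation $\rho$. For $z\in\mathbb{R}$ define \[f(z)=\mathbb{P}(A=u)\,\mathbb{P}(U>z)\,\mathbb{E}[U+V\mid U>z]+\mathbb{P}(A=v)\,\mathbb{P}(V>z)\,\mathbb{E}[U+V\mid V>z]\] (equivalently $f(z)=\mathbb{E}[D(U+V)]$ with $D=\mathbb{I}(A=u,U>z)+\mathbb{I}(A=v,V>z)$). If $\rho\in(-1,1)$, then $f'(0)>0$, $f$ attains its maximum at \[z^*=\frac{\rho-1}{\rho+1}\,\mu,\] and $f(z^* )>0$.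
   Context: $z$ is a hurdle rate: an innovation is adopted iff its effect on the primary dimension $A$ exceeds $z$. $f(z)$ is the long-run average overall performance of the firm under this rule. *)

theory Defs
  imports "HOL-Probability.Probability"
begin

definition bvn_density :: "real \<Rightarrow> real \<Rightarrow> real \<Rightarrow> real \<times> real \<Rightarrow> real" where
  "bvn_density mu sig rho = (\<lambda>(a, b).
     exp (- (((a - mu)^2 - 2 * rho * (a - mu) * (b - mu) + (b - mu)^2)
             / (2 * sig^2 * (1 - rho^2))))
     / (2 * pi * sig^2 * sqrt (1 - rho^2)))"

definition cond_exp_event :: "'a measure \<Rightarrow> ('a \<Rightarrow> real) \<Rightarrow> 'a set \<Rightarrow> real" where
  "cond_exp_event M X B = (\<integral>x. indicator B x * X x \<partial>M) / measure M B"

definition hurdle_perf ::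
  "'a measure \<Rightarrow> ('a \<Rightarrow> 'b) \<Rightarrow> ('a \<Rightarrow> real) \<Rightarrow> ('a \<Rightarrow> real) \<Rightarrow> 'b \<Rightarrow> 'b \<Rightarrow> real \<Rightarrow> real" where
  "hurdle_perf M A U V u v z =
     measure M {x \<in> space M. A x = u} * measure M {x \<in> space M. U x > z}
       * cond_exp_event M (\<lambda>x. U x + V x) {x \<in> space M. U x > z}
   + measure M {x \<in> space M. A x = v} * measure M {x \<in> space M. V x > z}
       * cond_exp_event M (\<lambda>x. U x + V x) {x \<in> space M. V x > z}"

end

theory Submission
  imports Defs
begin

text \<open>Since E[V | U = a] = mu + rho (a - mu), the term P(U > z) E[U + V | U > z] equals G z (tail_gain), the
  integral over a > z of phi(a) ((1 + rho) a + (1 - rho) mu), phi the N(mu, sig^2) density. The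
  bivariate normal law is symmetric, so the V-term equals G z as well and f = (p_u + p_v) G = G. Now G' z = -phi(z) (1 + rho) (z - z*) changes sign from + to -
  at z*, which is therefore the maximum; G' 0 = -phi(0) (1 - rho) mu > 0; and G z* > 0 because G is
  nonnegative and strictly decreasing to the right of z*.\<close>

lemma integral_normal_density_mult_add:
  fixes m s a :: real
  assumes "s > 0"
  shows "(\<integral>b. normal_density m s b * (a + b) \<partial>lborel) = a + m"
proof -
  have "(\<integral>b. normal_density m s b * (a + b) \<partial>lborel)
      = (\<integral>b. a * normal_density m s b + normal_density m s b * b \<partial>lborel)"
    by (simp add: algebra_simps)
  also have "\<dots> = a * (\<integral>b. normal_density m s b \<partial>lborel) + (\<integral>b. normal_density m s b * b \<partial>lborel)"
    using assms by (simp add: integrable_normal_moment_nz_1)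
  also have "\<dots> = a + m"
    using assms by (simp add: integral_normal_moment_nz_1)
  finally show ?thesis .
qed

lemma nn_integral_normal_density:
  fixes m s :: real
  assumes "s > 0"
  shows "(\<integral>\<^sup>+b. ennreal (normal_density m s b) \<partial>lborel) = 1"
  using assms by (subst nn_integral_eq_integral) auto

lemma measure_mult_cond_exp_event:
  assumes B: "B \<in> sets M" "emeasure M B \<noteq> \<infinity>"
  shows "measure M B * cond_exp_event M X B = (\<integral>x. indicator B x * X x \<partial>M)"
proof (cases "measure M B = 0")
  case True
  then have "B \<in> null_sets M"
    using B emeasure_eq_ennreal_measure[of M B] by auto
  then have "AE x in M. indicator B x * X x = 0"
    by (auto elim: AE_not_in[THEN AE_mp] simp: indicator_def)
  then show ?thesis
    using True by (simp add: integral_eq_zero_AE)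
next
  case False
  then show ?thesis by (simp add: cond_exp_event_def)
qed

lemma bvn_density_swap: "bvn_density mu sig rho (a, b) = bvn_density mu sig rho (b, a)"
  unfolding bvn_density_def by (simp add: algebra_simps)

lemma borel_measurable_bvn_density[measurable]:
  "bvn_density mu sig rho \<in> borel_measurable (lborel \<Otimes>\<^sub>M lborel)"
  unfolding bvn_density_def by measurable

lemma distributed_bvn_density_swap:
  assumes "prob_space M"
    and joint: "distributed M lborel (\<lambda>x. (X x, Y x)) (\<lambda>w. ennreal (bvn_density mu sig rho w))"
  shows "distributed M lborel (\<lambda>x. (Y x, X x)) (\<lambda>w. ennreal (bvn_density mu sig rho w))"
proof -
  interpret prob_space M by fact
  have "distributed M (lborel \<Otimes>\<^sub>M lborel) (\<lambda>x. (X x, Y x)) (\<lambda>w. ennreal (bvn_density mu sig rho w))"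
    using joint by (simp add: lborel_prod)
  then have "distributed M (lborel \<Otimes>\<^sub>M lborel) (\<lambda>x. (Y x, X x))
               (\<lambda>(a, b). ennreal (bvn_density mu sig rho (b, a)))"
    by (intro distributed_swap lborel.sigma_finite_measure_axioms)
  moreover have "(\<lambda>(a, b). ennreal (bvn_density mu sig rho (b, a))) = (\<lambda>w. ennreal (bvn_density mu sig rho w))"
    by (auto simp: bvn_density_swap)
  ultimately show ?thesis by (simp add: lborel_prod)
qed

text \<open>phi(a) E[U + V | U = a], so that tail_gain z = E[(U + V) 1(U > z)].\<close>
definition gain_density :: "real \<Rightarrow> real \<Rightarrow> real \<Rightarrow> real \<Rightarrow> real" where
  "gain_density mu sig rho a = normal_density mu sig a * ((1 + rho) * a + (1 - rho) * mu)"

definition tail_gain :: "real \<Rightarrow> real \<Rightarrow> real \<Rightarrow> real \<Rightarrow> real" where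
  "tail_gain mu sig rho z = (\<integral>a. indicator {z<..} a * gain_density mu sig rho a \<partial>lborel)"

context
  fixes mu sig rho :: real
  assumes sig_pos: "sig > 0" and rho_gt: "-1 < rho" and rho_less: "rho < 1"
begin

lemma cond_sd_pos: "sig * sqrt (1 - rho^2) > 0"
proof -
  have "rho^2 < 1" using rho_gt rho_less by (simp add: abs_square_less_1 abs_less_iff)
  then show ?thesis using sig_pos by simp
qed

lemma bvn_density_eq_normal_density_mult:
  "bvn_density mu sig rho (a, b) =
     normal_density mu sig a * normal_density (mu + rho * (a - mu)) (sig * sqrt (1 - rho^2)) b"
proof -
  define t where "t = sqrt (1 - rho^2)"
  have rho_sq: "1 - rho^2 > 0" using rho_gt rho_less by (simp add: abs_square_less_1 abs_less_iff)
  then have t: "t > 0" "t^2 = 1 - rho^2" by (auto simp: t_def)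
  have st: "(sig * t)^2 = sig^2 * (1 - rho^2)" using t by (simp add: power_mult_distrib)
  have sqrt_a: "sqrt (2 * pi * sig^2) = sqrt (2 * pi) * sig"
    using sig_pos by (simp add: real_sqrt_mult)
  have sqrt_b: "sqrt (2 * pi * (sig * t)^2) = sqrt (2 * pi) * (sig * t)"
    using sig_pos t by (simp add: real_sqrt_mult power_mult_distrib t_def)
  have exponent: "- (((a - mu)^2 - 2 * rho * (a - mu) * (b - mu) + (b - mu)^2) / (2 * sig^2 * (1 - rho^2)))
     = - ((a - mu)^2) / (2 * sig^2) + - ((b - (mu + rho * (a - mu)))^2) / (2 * (sig^2 * (1 - rho^2)))"
    using sig_pos rho_sq by (simp add: field_simps) algebra
  have "bvn_density mu sig rho (a, b) =
      exp (- ((a - mu)^2) / (2 * sig^2)) * exp (- ((b - (mu + rho * (a - mu)))^2) / (2 * (sig * t)^2))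
        / (2 * pi * sig^2 * t)"
    by (simp only: bvn_density_def split exponent exp_add st t_def[symmetric])
  also have "\<dots> = (1 / sqrt (2 * pi * sig^2) * exp (- ((a - mu)^2) / (2 * sig^2))) *
      (1 / sqrt (2 * pi * (sig * t)^2) * exp (- ((b - (mu + rho * (a - mu)))^2) / (2 * (sig * t)^2)))"
    unfolding sqrt_a sqrt_b using sig_pos t by (simp add: field_simps power2_eq_square)
  finally show ?thesis unfolding normal_density_def t_def .
qed

lemma bvn_density_nonneg: "bvn_density mu sig rho w \<ge> 0"
  by (cases w) (simp add: bvn_density_eq_normal_density_mult)

lemma nn_integral_bvn_density_mult_fst:
  assumes [measurable]: "g \<in> borel_measurable borel"
  shows "(\<integral>\<^sup>+w. ennreal (bvn_density mu sig rho w) * g (fst w) \<partial>(lborel \<Otimes>\<^sub>M lborel))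
       = (\<integral>\<^sup>+a. ennreal (normal_density mu sig a) * g a \<partial>lborel)"
proof -
  have "(\<integral>\<^sup>+w. ennreal (bvn_density mu sig rho w) * g (fst w) \<partial>(lborel \<Otimes>\<^sub>M lborel))
      = (\<integral>\<^sup>+a. \<integral>\<^sup>+b. ennreal (bvn_density mu sig rho (a, b)) * g a \<partial>lborel \<partial>lborel)"
    by (subst lborel.nn_integral_fst[symmetric]) auto
  also have "\<dots> = (\<integral>\<^sup>+a. ennreal (normal_density mu sig a) * g a \<partial>lborel)"
  proof (rule nn_integral_cong)
    fix a
    have "(\<integral>\<^sup>+b. ennreal (bvn_density mu sig rho (a, b)) * g a \<partial>lborel)
        = (\<integral>\<^sup>+b. (ennreal (normal_density mu sig a) * g a)
              * ennreal (normal_density (mu + rho * (a - mu)) (sig * sqrt (1 - rho^2)) b) \<partial>lborel)"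
      by (intro nn_integral_cong) (simp add: bvn_density_eq_normal_density_mult ennreal_mult mult_ac)
    also have "\<dots> = ennreal (normal_density mu sig a) * g a"
      by (simp add: nn_integral_cmult nn_integral_normal_density cond_sd_pos)
    finally show "(\<integral>\<^sup>+b. ennreal (bvn_density mu sig rho (a, b)) * g a \<partial>lborel)
        = ennreal (normal_density mu sig a) * g a" .
  qed
  finally show ?thesis .
qed

lemma integrable_bvn_density_mult_fst:
  "integrable (lborel \<Otimes>\<^sub>M lborel) (\<lambda>w. bvn_density mu sig rho w * fst w)"
proof (rule integrableI_bounded)
  have "(\<integral>\<^sup>+w. ennreal (norm (bvn_density mu sig rho w * fst w)) \<partial>(lborel \<Otimes>\<^sub>M lborel))
      = (\<integral>\<^sup>+w. ennreal (bvn_density mu sig rho w) * ennreal \<bar>fst w\<bar> \<partial>(lborel \<Otimes>\<^sub>M lborel))"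
    by (intro nn_integral_cong) (simp add: abs_mult bvn_density_nonneg ennreal_mult)
  also have "\<dots> = (\<integral>\<^sup>+a. ennreal (normal_density mu sig a) * ennreal \<bar>a\<bar> \<partial>lborel)"
    by (rule nn_integral_bvn_density_mult_fst) measurable
  also have "\<dots> = ennreal (\<integral>a. normal_density mu sig a * \<bar>a\<bar> \<partial>lborel)"
    using integrable_norm[OF integrable_normal_moment_nz_1[OF sig_pos, of mu]]
    by (subst nn_integral_eq_integral[symmetric]) (auto simp: abs_mult ennreal_mult)
  finally show "(\<integral>\<^sup>+w. ennreal (norm (bvn_density mu sig rho w * fst w)) \<partial>(lborel \<Otimes>\<^sub>M lborel)) < \<infinity>"
    by simp
qed simp

lemma integrable_bvn_density_mult_snd:
  "integrable (lborel \<Otimes>\<^sub>M lborel) (\<lambda>w. bvn_density mu sig rho w * snd w)"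
proof -
  have "(\<lambda>(a, b). bvn_density mu sig rho (b, a) * a) = (\<lambda>w. bvn_density mu sig rho w * fst w)"
    by (auto simp: bvn_density_swap)
  then show ?thesis
    using lborel_pair.integrable_product_swap_iff[of "\<lambda>w. bvn_density mu sig rho w * snd w"]
      integrable_bvn_density_mult_fst
    by simp
qed

lemma integral_bvn_density_mult_indicator_sum:
  assumes [measurable]: "S \<in> sets borel"
  shows "(\<integral>w. bvn_density mu sig rho w * (indicator S (fst w) * (fst w + snd w)) \<partial>(lborel \<Otimes>\<^sub>M lborel))
       = (\<integral>a. indicator S a * gain_density mu sig rho a \<partial>lborel)"
proof -
  let ?f = "\<lambda>w. bvn_density mu sig rho w * (indicator S (fst w) * (fst w + snd w))"
  have "?f = (\<lambda>w. indicator (S \<times> UNIV) w *\<^sub>R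
               (bvn_density mu sig rho w * fst w + bvn_density mu sig rho w * snd w))"
    by (auto simp: fun_eq_iff indicator_def algebra_simps)
  then have integrable: "integrable (lborel \<Otimes>\<^sub>M lborel) ?f"
    by (simp only:) (intro integrable_mult_indicator Bochner_Integration.integrable_add
        integrable_bvn_density_mult_fst integrable_bvn_density_mult_snd; simp)
  have "(\<integral>w. ?f w \<partial>(lborel \<Otimes>\<^sub>M lborel)) = (\<integral>a. (\<integral>b. ?f (a, b) \<partial>lborel) \<partial>lborel)"
    using lborel_pair.integral_fst'[OF integrable] by simp
  also have "\<dots> = (\<integral>a. indicator S a * gain_density mu sig rho a \<partial>lborel)"
  proof (rule Bochner_Integration.integral_cong[OF refl])
    fix a
    have "(\<integral>b. ?f (a, b) \<partial>lborel) = (\<integral>b. (indicator S a * normal_density mu sig a) *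
            (normal_density (mu + rho * (a - mu)) (sig * sqrt (1 - rho^2)) b * (a + b)) \<partial>lborel)"
      by (simp add: bvn_density_eq_normal_density_mult mult_ac)
    also have "\<dots> = indicator S a * normal_density mu sig a * (a + (mu + rho * (a - mu)))"
      by (simp add: integral_normal_density_mult_add cond_sd_pos)
    also have "\<dots> = indicator S a * gain_density mu sig rho a"
      by (simp add: gain_density_def algebra_simps)
    finally show "(\<integral>b. ?f (a, b) \<partial>lborel) = indicator S a * gain_density mu sig rho a" .
  qed
  finally show ?thesis .
qed

lemma cond_exp_event_tail_eq_tail_gain:
  assumes "prob_space M"
    and joint: "distributed M lborel (\<lambda>x. (X x, Y x)) (\<lambda>w. ennreal (bvn_density mu sig rho w))"
  shows "measure M {x \<in> space M. X x > z} * cond_exp_event M (\<lambda>x. X x + Y x) {x \<in> space M. X x > z}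
       = tail_gain mu sig rho z"
proof -
  interpret prob_space M by fact
  have "(\<lambda>x. (X x, Y x)) \<in> measurable M (borel \<Otimes>\<^sub>M borel)"
    using distributed_measurable[OF joint] by (simp add: borel_prod)
  then have [measurable]: "X \<in> borel_measurable M"
    by (simp add: measurable_pair_iff comp_def)
  have "measure M {x \<in> space M. X x > z} * cond_exp_event M (\<lambda>x. X x + Y x) {x \<in> space M. X x > z}
      = (\<integral>x. indicator {x \<in> space M. X x > z} x * (X x + Y x) \<partial>M)"
    by (intro measure_mult_cond_exp_event) auto
  also have "\<dots> = (\<integral>x. (\<lambda>w. indicator {z<..} (fst w) * (fst w + snd w)) (X x, Y x) \<partial>M)"
    by (intro Bochner_Integration.integral_cong) (auto simp: indicator_def)
  also have "\<dots> = (\<integral>w. bvn_density mu sig rho w * (indicator {z<..} (fst w) * (fst w + snd w)) \<partial>lborel)"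
  proof (rule distributed_integral[OF joint, symmetric])
    have "(\<lambda>w. indicator {z<..} (fst w) * (fst w + snd w)) \<in> borel_measurable (lborel \<Otimes>\<^sub>M lborel)"
      by measurable
    then show "(\<lambda>w. indicator {z<..} (fst w) * (fst w + snd w)) \<in> borel_measurable lborel"
      by (simp add: lborel_prod)
  qed (auto simp: bvn_density_nonneg)
  also have "\<dots> = tail_gain mu sig rho z"
    unfolding tail_gain_def
    using integral_bvn_density_mult_indicator_sum[of "{z<..}"] by (simp add: lborel_prod)
  finally show ?thesis .
qed

lemma continuous_on_gain_density: "continuous_on S (gain_density mu sig rho)"
  unfolding gain_density_def normal_density_def using sig_pos by (intro continuous_intros) auto

lemma integrable_gain_density: "integrable lborel (gain_density mu sig rho)"
proof -
  have "gain_density mu sig rho = (\<lambda>a. (1 + rho) * (normal_density mu sig a * a)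
                                       + ((1 - rho) * mu) * normal_density mu sig a)"
    by (auto simp: fun_eq_iff gain_density_def algebra_simps)
  then show ?thesis
    using sig_pos by (simp add: integrable_normal_moment_nz_1)
qed

lemma tail_gain_split:
  assumes "c \<le> t"
  shows "tail_gain mu sig rho c = (LBINT a=c..t. gain_density mu sig rho a) + tail_gain mu sig rho t"
proof -
  have "tail_gain mu sig rho c = (\<integral>a. indicator {c<..t} a * gain_density mu sig rho a
                                     + indicator {t<..} a * gain_density mu sig rho a \<partial>lborel)"
    unfolding tail_gain_def using assms
    by (intro Bochner_Integration.integral_cong) (auto simp: indicator_def)
  also have "\<dots> = (\<integral>a. indicator {c<..t} a * gain_density mu sig rho a \<partial>lborel) + tail_gain mu sig rho t"
    unfolding tail_gain_def
    by (intro Bochner_Integration.integral_add integrable_mult_indicator[OF _ integrable_gain_density,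
          simplified]) auto
  also have "(\<integral>a. indicator {c<..t} a * gain_density mu sig rho a \<partial>lborel)
      = (LBINT a=c..t. gain_density mu sig rho a)"
    using assms by (simp add: interval_integral_Ioc set_lebesgue_integral_def)
  finally show ?thesis .
qed

lemma tail_gain_has_real_derivative:
  "(tail_gain mu sig rho has_real_derivative - gain_density mu sig rho z) (at z)"
proof -
  define c d where "c = z - 1" and "d = z + 1"
  have "((\<lambda>t. LBINT a=c..t. gain_density mu sig rho a) has_vector_derivative gain_density mu sig rho z)
          (at z within {c..d})"
    by (rule interval_integral_FTC2) (auto simp: c_def d_def continuous_on_gain_density)
  then have "((\<lambda>t. LBINT a=c..t. gain_density mu sig rho a) has_real_derivative gain_density mu sig rho z) (at z)"
    using at_within_Icc_at[of c z d]
    by (simp add: has_real_derivative_iff_has_vector_derivative c_def d_def)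
  then have "((\<lambda>t. tail_gain mu sig rho c - (LBINT a=c..t. gain_density mu sig rho a))
               has_real_derivative - gain_density mu sig rho z) (at z)"
    by (intro derivative_eq_intros) auto
  then show ?thesis
  proof (rule has_field_derivative_transform_within_open[where S="{c<..<d}"])
    fix t assume "t \<in> {c<..<d}"
    then show "tail_gain mu sig rho c - (LBINT a=c..t. gain_density mu sig rho a) = tail_gain mu sig rho t"
      using tail_gain_split[of c t] by simp
  qed (auto simp: c_def d_def)
qed

lemma gain_density_eq_factored:
  "gain_density mu sig rho a = normal_density mu sig a * (1 + rho) * (a - (rho - 1) / (rho + 1) * mu)"
  using rho_gt unfolding gain_density_def by (simp add: field_simps)

lemma zero_less_gain_density_iff: "0 < gain_density mu sig rho a \<longleftrightarrow> (rho - 1) / (rho + 1) * mu < a"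
proof -
  define c where "c = normal_density mu sig a * (1 + rho)"
  have "c > 0" using rho_gt normal_density_pos[OF sig_pos] by (simp add: c_def)
  then show ?thesis
    by (auto simp: gain_density_eq_factored zero_less_mult_iff simp flip: c_def)
qed

lemma gain_density_less_zero_iff: "gain_density mu sig rho a < 0 \<longleftrightarrow> a < (rho - 1) / (rho + 1) * mu"
proof -
  define c where "c = normal_density mu sig a * (1 + rho)"
  have "c > 0" using rho_gt normal_density_pos[OF sig_pos] by (simp add: c_def)
  then show ?thesis
    by (auto simp: gain_density_eq_factored mult_less_0_iff simp flip: c_def)
qed

lemma tail_gain_le_argmax: "tail_gain mu sig rho z \<le> tail_gain mu sig rho ((rho - 1) / (rho + 1) * mu)"
proof (cases "z \<le> (rho - 1) / (rho + 1) * mu")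
  case True
  then show ?thesis
    by (intro deriv_nonneg_imp_mono[OF tail_gain_has_real_derivative])
      (auto simp: not_less[symmetric] zero_less_gain_density_iff)
next
  case False
  then show ?thesis
    by (intro deriv_nonpos_imp_antimono[OF tail_gain_has_real_derivative])
      (auto simp: not_less[symmetric] gain_density_less_zero_iff)
qed

lemma tail_gain_argmax_pos: "tail_gain mu sig rho ((rho - 1) / (rho + 1) * mu) > 0"
proof -
  let ?z = "(rho - 1) / (rho + 1) * mu"
  have "tail_gain mu sig rho (?z + 1) \<ge> 0"
    unfolding tail_gain_def
    by (intro Bochner_Integration.integral_nonneg)
      (auto simp: indicator_def intro: less_imp_le simp: zero_less_gain_density_iff)
  moreover obtain w where "?z < w" and
    "tail_gain mu sig rho (?z + 1) - tail_gain mu sig rho ?z = ((?z + 1) - ?z) * - gain_density mu sig rho w"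
    using MVT2[of ?z "?z + 1" "tail_gain mu sig rho", OF _ tail_gain_has_real_derivative] by auto
  moreover from \<open>?z < w\<close> have "gain_density mu sig rho w > 0"
    by (simp add: zero_less_gain_density_iff)
  ultimately show ?thesis by simp
qed

lemma hurdle_perf_eq_tail_gain:
  assumes "prob_space M"
    and "measure M {x \<in> space M. A x = u} + measure M {x \<in> space M. A x = v} = 1"
    and "distributed M lborel (\<lambda>x. (U x, V x)) (\<lambda>w. ennreal (bvn_density mu sig rho w))"
  shows "hurdle_perf M A U V u v z = tail_gain mu sig rho z"
proof -
  have "measure M {x \<in> space M. U x > z} * cond_exp_event M (\<lambda>x. U x + V x) {x \<in> space M. U x > z}
      = tail_gain mu sig rho z"
    using cond_exp_event_tail_eq_tail_gain[OF assms(1,3)] .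
  moreover have "measure M {x \<in> space M. V x > z} * cond_exp_event M (\<lambda>x. V x + U x) {x \<in> space M. V x > z}
      = tail_gain mu sig rho z"
    using cond_exp_event_tail_eq_tail_gain[OF assms(1) distributed_bvn_density_swap[OF assms(1,3)]] .
  moreover have "(\<lambda>x. V x + U x) = (\<lambda>x. U x + V x)"
    by (simp add: add.commute)
  ultimately have "hurdle_perf M A U V u v z
      = (measure M {x \<in> space M. A x = u} + measure M {x \<in> space M. A x = v}) * tail_gain mu sig rho z"
    unfolding hurdle_perf_def mult.assoc by (simp only: distrib_right)
  then show ?thesis
    using assms(2) by simp
qed

end

theorem proposition2:
  fixes M :: "'a measure" and A :: "'a \<Rightarrow> 'b" and U V :: "'a \<Rightarrow> real"
    and u v :: 'b and p_u p_v mu sig rho :: real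
  assumes "prob_space M"
    and "A \<in> measurable M (count_space UNIV)"
    and "\<forall>x \<in> space M. A x \<in> {u, v}"
    and "measure M {x \<in> space M. A x = u} = p_u"
    and "measure M {x \<in> space M. A x = v} = p_v"
    and "p_u + p_v = 1"
    and "\<forall>a. \<forall>S \<in> sets (borel :: (real \<times> real) measure).
           measure M {x \<in> space M. A x = a \<and> (U x, V x) \<in> S}
             = measure M {x \<in> space M. A x = a} * measure M {x \<in> space M. (U x, V x) \<in> S}"
    and "distributed M lborel (\<lambda>x. (U x, V x)) (\<lambda>w. ennreal (bvn_density mu sig rho w))"
    and "mu < 0" and "sig > 0"
    and "-1 < rho" and "rho < 1"
  shows "(\<exists>D. (hurdle_perf M A U V u v has_real_derivative D) (at 0) \<and> D > 0)
       \<and> (\<forall>z. hurdle_perf M A U V u v z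
               \<le> hurdle_perf M A U V u v ((rho - 1) / (rho + 1) * mu))
       \<and> hurdle_perf M A U V u v ((rho - 1) / (rho + 1) * mu) > 0"
proof -
  note params = \<open>sig > 0\<close> \<open>-1 < rho\<close> \<open>rho < 1\<close>
  have "measure M {x \<in> space M. A x = u} + measure M {x \<in> space M. A x = v} = 1"
    using assms(4-6) by simp
  then have f_eq: "hurdle_perf M A U V u v = tail_gain mu sig rho"
    by (intro ext hurdle_perf_eq_tail_gain[OF params \<open>prob_space M\<close> _ \<open>distributed M lborel _ _\<close>])
  have "0 < (rho - 1) / (rho + 1) * mu"
    using \<open>mu < 0\<close> params by (intro mult_neg_neg divide_neg_pos) auto
  then have "- gain_density mu sig rho 0 > 0"
    using gain_density_less_zero_iff[OF params] by simp
  then show ?thesis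
    unfolding f_eq
    by (intro conjI allI exI[of _ "- gain_density mu sig rho 0"] tail_gain_has_real_derivative
        tail_gain_le_argmax tail_gain_argmax_pos params)
qed

end
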